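(* Let $\mathcal{A}$ be a set of $N$ arms and let $1\le B\le N$. Consider any deterministic algorithm which, in each round $t=1,\dots,T$, chooses a subset $S_t\subset\mathcal{A}$ with $|S_t|=B$ as a function of the previously revealed cost functions $c_1,\dots,c_{t-1}$ (full feedback). Then its worst-case regret satisfies \[R_T^*\ \ge\ \left(1-\frac{B}{N}\right)T.\]
   Context: In each round $t\in[T]$ an (oblivious) adversary fixes a cost function $c_t:\mathcal{A}\to[0,1]$; the algorithm picks $S_t\subset\mathcal{A}$, $|S_t|=B$, and incurs cost $c_t(S_t):=\min_{a\in S_t}c_t(a)$; in the full feedback setting the whole function $c_t$ is then revealed. For an algorithm $\mathbf{ALG}$ the worst-case expected regret is $R_T^*(\mathbf{ALG}):=\max_{c_1,\dots,c_T}\mathbb{E}\left[\sum_{t=1}^T c_t(S_t)-\min_{a^*\in\mathcal{A}}\sum_{t=1}^T c_t(a^* )\right]$, the expectation being over the algorithm's randomness. *)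

theory Defs
  imports Complex_Main
begin

text \<open>Rounds are indexed 0,...,T-1. A cost sequence is c :: nat => 'a => real,
  c t being the cost function of round t. A deterministic full-feedback algorithm
  is a map from the history of revealed cost functions (list, oldest first)
  to the chosen subset.\<close>

definition valid_costs :: "'a set \<Rightarrow> (nat \<Rightarrow> 'a \<Rightarrow> real) \<Rightarrow> bool" where
  "valid_costs A c \<longleftrightarrow> (\<forall>t. \<forall>a\<in>A. 0 \<le> c t a \<and> c t a \<le> 1)"

definition set_cost :: "('a \<Rightarrow> real) \<Rightarrow> 'a set \<Rightarrow> real" where
  "set_cost f S = Min (f ` S)"

definition chosen :: "(('a \<Rightarrow> real) list \<Rightarrow> 'a set) \<Rightarrow> (nat \<Rightarrow> 'a \<Rightarrow> real) \<Rightarrow> nat \<Rightarrow> 'a set" where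
  "chosen alg c t = alg (map c [0..<t])"

definition regret ::
  "'a set \<Rightarrow> (('a \<Rightarrow> real) list \<Rightarrow> 'a set) \<Rightarrow> nat \<Rightarrow> (nat \<Rightarrow> 'a \<Rightarrow> real) \<Rightarrow> real" where
  "regret A alg T c =
     (\<Sum>t<T. set_cost (c t) (chosen alg c t)) - Min ((\<lambda>a. \<Sum>t<T. c t a) ` A)"

text \<open>Worst-case (expected) regret of a deterministic algorithm: the expectation
  is trivial, so it is the supremum of the regret over admissible cost sequences.\<close>
definition worst_case_regret ::
  "'a set \<Rightarrow> (('a \<Rightarrow> real) list \<Rightarrow> 'a set) \<Rightarrow> nat \<Rightarrow> real" where
  "worst_case_regret A alg T = Sup {regret A alg T c | c. valid_costs A c}"

end

theory Submission
  imports Defs "HOL-Library.Indicator_Function"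
begin

text \<open>A deterministic algorithm's next choice is a function of the past, so an adaptive
  adversary can compute it in advance and charge cost 1 exactly to the B arms about to be
  chosen and 0 to all others. The algorithm then pays 1 in every round, T in total, while the
  N arms together accumulate cost T B, so the best single arm pays at most T B / N.\<close>

definition admissible_alg :: "'a set \<Rightarrow> nat \<Rightarrow> (('a \<Rightarrow> real) list \<Rightarrow> 'a set) \<Rightarrow> bool" where
  "admissible_alg A B alg \<longleftrightarrow>
     (\<forall>h. (\<forall>f\<in>set h. \<forall>a\<in>A. 0 \<le> f a \<and> f a \<le> 1) \<longrightarrow> alg h \<subseteq> A \<and> card (alg h) = B)"

lemma Min_image_le_average:
  fixes f :: "'a \<Rightarrow> 'b::linordered_field"
  assumes "finite A" and "A \<noteq> {}"
  shows "Min (f ` A) \<le> sum f A / of_nat (card A)"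
proof -
  have "of_nat (card A) * Min (f ` A) \<le> sum f A"
    using assms by (intro sum_bounded_below) simp
  moreover have "card A > 0"
    using assms by (simp add: card_gt_0_iff)
  ultimately show ?thesis
    by (simp add: field_simps)
qed

lemma set_cost_le_1:
  assumes "finite S" and "S \<noteq> {}" and "\<forall>a\<in>S. f a \<le> 1"
  shows "set_cost f S \<le> 1"
  using assms by (auto simp: set_cost_def Min_le_iff)

lemma set_cost_indicator_self:
  assumes "finite S" and "S \<noteq> {}"
  shows "set_cost (indicator S) S = 1"
proof -
  have "indicator S ` S = {1::real}"
    using assms by auto
  then show ?thesis
    by (simp add: set_cost_def)
qed

lemma chosen_subset_card:
  assumes "admissible_alg A B alg" and "valid_costs A c"
  shows "chosen alg c t \<subseteq> A \<and> card (chosen alg c t) = B"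
  using assms by (auto simp: admissible_alg_def valid_costs_def chosen_def)

lemma regret_le_horizon:
  assumes alg: "admissible_alg A B alg" and "finite A" and "1 \<le> B" and c: "valid_costs A c"
  shows "regret A alg T c \<le> real T"
proof -
  have S: "chosen alg c t \<subseteq> A" "finite (chosen alg c t)" "chosen alg c t \<noteq> {}" for t
    using chosen_subset_card[OF alg c, of t] \<open>1 \<le> B\<close> by (auto intro: card_ge_0_finite)
  then have "A \<noteq> {}"
    by blast
  have "set_cost (c t) (chosen alg c t) \<le> 1" for t
    using S[of t] c by (intro set_cost_le_1) (auto simp: valid_costs_def)
  then have "(\<Sum>t<T. set_cost (c t) (chosen alg c t)) \<le> real T"
    using sum_mono[of "{..<T}" _ "\<lambda>_. 1::real"] by simp
  moreover have "0 \<le> Min ((\<lambda>a. \<Sum>t<T. c t a) ` A)"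
    using \<open>finite A\<close> \<open>A \<noteq> {}\<close> c by (auto simp: valid_costs_def intro!: sum_nonneg)
  ultimately show ?thesis
    by (simp add: regret_def)
qed

lemma regret_le_worst_case_regret:
  assumes "admissible_alg A B alg" and "finite A" and "1 \<le> B" and "valid_costs A c"
  shows "regret A alg T c \<le> worst_case_regret A alg T"
proof -
  have "bdd_above {regret A alg T c | c. valid_costs A c}"
    using regret_le_horizon[OF assms(1-3)] by (auto simp: bdd_above_def)
  then show ?thesis
    unfolding worst_case_regret_def using assms(4) by (auto intro: cSup_upper)
qed

primrec adversary_history :: "(('a \<Rightarrow> real) list \<Rightarrow> 'a set) \<Rightarrow> nat \<Rightarrow> ('a \<Rightarrow> real) list" where
  "adversary_history alg 0 = []"
| "adversary_history alg (Suc t) =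
     adversary_history alg t @ [indicator (alg (adversary_history alg t))]"

definition adversary_costs :: "(('a \<Rightarrow> real) list \<Rightarrow> 'a set) \<Rightarrow> nat \<Rightarrow> 'a \<Rightarrow> real" where
  "adversary_costs alg t = indicator (alg (adversary_history alg t))"

lemma adversary_costs_eq_indicator_chosen:
  "adversary_costs alg t = indicator (chosen alg (adversary_costs alg) t)"
proof -
  have "map (adversary_costs alg) [0..<t] = adversary_history alg t"
    by (induction t) (simp_all add: adversary_costs_def)
  then show ?thesis
    by (simp add: adversary_costs_def chosen_def)
qed

lemma valid_adversary_costs: "valid_costs A (adversary_costs alg)"
  by (simp add: valid_costs_def adversary_costs_def indicator_def)

lemma regret_adversary_costs:
  assumes alg: "admissible_alg A B alg" and "finite A" and "card A = N" and "1 \<le> B"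
  shows "(1 - real B / real N) * real T \<le> regret A alg T (adversary_costs alg)"
proof -
  let ?c = "adversary_costs alg"
  let ?S = "chosen alg ?c"
  have S: "?S t \<subseteq> A" "card (?S t) = B" for t
    using chosen_subset_card[OF alg valid_adversary_costs] by blast+
  then have "A \<noteq> {}" and "N > 0"
    using \<open>1 \<le> B\<close> \<open>finite A\<close> \<open>card A = N\<close> card_mono[of A "?S 0"] by fastforce+
  have "set_cost (?c t) (?S t) = 1" for t
    using S[of t] \<open>1 \<le> B\<close> \<open>finite A\<close> finite_subset
    by (subst adversary_costs_eq_indicator_chosen) (intro set_cost_indicator_self; fastforce)
  then have algorithm_cost: "(\<Sum>t<T. set_cost (?c t) (?S t)) = real T"
    by simp
  have "(\<Sum>a\<in>A. \<Sum>t<T. ?c t a) = (\<Sum>t<T. \<Sum>a\<in>A. indicator (?S t) a)"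
    by (subst sum.swap) (simp flip: adversary_costs_eq_indicator_chosen)
  also have "\<dots> = (\<Sum>t<T. real B)"
    using S \<open>finite A\<close> by (intro sum.cong) (simp_all add: indicator_def sum.If_cases Int_absorb1)
  finally have "Min ((\<lambda>a. \<Sum>t<T. ?c t a) ` A) \<le> real T * real B / real N"
    using Min_image_le_average[OF \<open>finite A\<close> \<open>A \<noteq> {}\<close>, of "\<lambda>a. \<Sum>t<T. ?c t a"] \<open>card A = N\<close>
    by (simp add: mult.commute)
  with algorithm_cost \<open>N > 0\<close> show ?thesis
    by (simp add: regret_def field_simps)
qed

theorem proposition1:
  fixes A :: "'a set" and N B T :: nat
    and alg :: "('a \<Rightarrow> real) list \<Rightarrow> 'a set"
  assumes "finite A" and "card A = N" and "1 \<le> B" and "B \<le> N"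
    and "\<And>h. (\<forall>f\<in>set h. \<forall>a\<in>A. 0 \<le> f a \<and> f a \<le> 1) \<Longrightarrow> alg h \<subseteq> A \<and> card (alg h) = B"
  shows "worst_case_regret A alg T \<ge> (1 - real B / real N) * real T"
proof -
  have alg: "admissible_alg A B alg"
    using assms(5) by (simp add: admissible_alg_def)
  have "(1 - real B / real N) * real T \<le> regret A alg T (adversary_costs alg)"
    using regret_adversary_costs[OF alg assms(1-3)] .
  also have "\<dots> \<le> worst_case_regret A alg T"
    using regret_le_worst_case_regret[OF alg assms(1,3) valid_adversary_costs] .
  finally show ?thesis .
qed

end
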